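(* Let $a,b,c$ be nonnegative integers with $a+b+c=n$ and suppose $\gcd(a+b,b+c)=1$. Let $M=M(a,b,c\mid n)$ and let $P$ be the unique connected component of $M$ that is a path (all other components being cycles), with vertices $u_1<u_2<\cdots<u_{n'}$ listed in increasing order as integers. Then there are exactly two indices $i\in\{1,\ldots,n'-1\}$ such that $u_i$ and $u_{i+1}$ are joined by an edge of $M$ (i.e. $M$ has exactly two dead ends).
   Context: For compositions $\underline x=(a_1,\ldots,a_m)$, $\underline y=(b_1,\ldots,b_t)$ of $n$ (nonnegative integers summing to $n$), the meander $M(\underline x\mid\underline y)$ is the graph on vertices $1,\ldots,n$ whose edges are: for each part $a_k$ with $s=a_1+\cdots+a_{k-1}$, the top edges $\{s+j,\,s+a_k+1-j\}$ for $1\le j\le\lfloor a_k/2\rfloor$; and for each part $b_k$ with $s=b_1+\cdots+b_{k-1}$, the bottom edges $\{s+j,\,s+b_k+1-j\}$ for $1\le j\le\lfloor b_k/2\rfloor$. Here $\underline x=(a,b,c)$ and $\underline y=(n)$. Under the hypothesis $\gcd(a+b,b+c)=1$, $M$ has exactly two vertices of degree $1$ and all others have degree $2$, so exactly one component of $M$ is a path and the rest are cycles. A dead end is an interval between consecutive vertices $u_i,u_{i+1}$ of $P$ (consecutive in the inherited order) such that $u_i$ and $u_{i+1}$ are adjacent in $M$.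
   Formalization: The parts a, b, c are positive integers rather than nonnegative ones, so compositions $(a,b,c)$ of n with a zero part are excluded. The statement above fails without it. *)

theory Defs
  imports Main
begin

definition comp_arcs :: "nat list \<Rightarrow> nat set set" where
  "comp_arcs xs = {{sum_list (take k xs) + j, sum_list (take k xs) + xs ! k + 1 - j} | k j.
      k < length xs \<and> 1 \<le> j \<and> j \<le> xs ! k div 2}"

text \<open>Adjacency in the meander M(xs | ys) (top arcs from xs, bottom arcs from ys).\<close>
definition meander_adj :: "nat list \<Rightarrow> nat list \<Rightarrow> nat \<Rightarrow> nat \<Rightarrow> bool" where
  "meander_adj xs ys u v \<longleftrightarrow> {u, v} \<in> comp_arcs xs \<union> comp_arcs ys"

definition is_component :: "nat set \<Rightarrow> (nat \<Rightarrow> nat \<Rightarrow> bool) \<Rightarrow> nat set \<Rightarrow> bool" where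
  "is_component V E C \<longleftrightarrow> C \<subseteq> V \<and> (\<exists>v\<in>C. C = {w \<in> V. (\<lambda>x y. x \<in> V \<and> y \<in> V \<and> E x y)\<^sup>*\<^sup>* v w})"

definition induces_path :: "(nat \<Rightarrow> nat \<Rightarrow> bool) \<Rightarrow> nat set \<Rightarrow> bool" where
  "induces_path E C \<longleftrightarrow> (\<exists>ps. distinct ps \<and> set ps = C \<and>
      (\<forall>i. i + 1 < length ps \<longrightarrow> E (ps ! i) (ps ! (i + 1))) \<and>
      (\<forall>u\<in>C. \<forall>v\<in>C. E u v \<longrightarrow> (\<exists>i. i + 1 < length ps \<and> {u, v} = {ps ! i, ps ! (i + 1)})))"

text \<open>Dead ends of a vertex set C: indices i (0-based) such that the i-th and (i+1)-th
  smallest elements of C are adjacent.\<close>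
definition dead_ends :: "(nat \<Rightarrow> nat \<Rightarrow> bool) \<Rightarrow> nat set \<Rightarrow> nat set" where
  "dead_ends E C = (let u = sorted_list_of_set C in
      {i. i + 1 < length u \<and> E (u ! i) (u ! (i + 1))})"

end

theory Submission
  imports Defs "HOL-Number_Theory.Number_Theory"
begin

text \<open>A top arc of \<open>M(a, b, c | n)\<close> reflects a vertex inside its block of \<open>a\<close>, \<open>b\<close> or \<open>c\<close>
  vertices, a bottom arc reflects it about the centre of \<open>{1..n}\<close>. A bottom reflection followed
  by a top reflection acts on the 0-based vertices, padded by \<open>b\<close> virtual positions, as the
  rotation by \<open>a + b\<close> modulo \<open>n + b\<close>. As \<open>gcd (a + b) (n + b) = gcd (a + b) (b + c) = 1\<close>, this
  rotation is transitive, so \<open>M\<close> is connected and \<open>P = {1..n}\<close>. A dead end is then an arc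
  \<open>{x, x + 1}\<close>, the innermost arc of a part of even length; the gcd condition makes exactly two
  of \<open>a, b, c, n\<close> even, and their midpoints differ because \<open>a \<noteq> c\<close>.\<close>

lemma comp_arcsI:
  assumes "k < length xs" "1 \<le> j" "j \<le> xs ! k div 2"
  shows "{sum_list (take k xs) + j, sum_list (take k xs) + xs ! k + 1 - j} \<in> comp_arcs xs"
  using assms unfolding comp_arcs_def by blast

lemma mirror_pair_in_comp_arcs:
  assumes "k < length xs" and "s = sum_list (take k xs)" and "L = xs ! k"
    and "s < x" and "x \<le> s + L" and "x + y = 2 * s + L + 1" and "x \<noteq> y"
  shows "{x, y} \<in> comp_arcs xs"
proof -
  define j where "j = min x y - s"
  have "{x, y} = {s + j, s + L + 1 - j}" and "1 \<le> j" and "j \<le> L div 2"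
    using assms(4-7) unfolding j_def by auto
  then show ?thesis
    using comp_arcsI[OF assms(1)] assms(2,3) by simp
qed

definition midpoints :: "nat list \<Rightarrow> nat set" where
  "midpoints xs = {sum_list (take k xs) + xs ! k div 2 | k. k < length xs \<and> even (xs ! k) \<and> 0 < xs ! k}"

lemma mem_midpoints_iff:
  "x \<in> midpoints xs \<longleftrightarrow> (\<exists>k < length xs. even (xs ! k) \<and> 0 < xs ! k \<and> x = sum_list (take k xs) + xs ! k div 2)"
  unfolding midpoints_def by blast

lemma midpoints_Nil: "midpoints [] = {}"
  by (simp add: midpoints_def)

lemma midpoints_Cons:
  "midpoints (x # xs) = (if even x \<and> 0 < x then {x div 2} else {}) \<union> (+) x ` midpoints xs"
proof -
  have "y \<in> midpoints (x # xs) \<longleftrightarrow> (even x \<and> 0 < x \<and> y = x div 2) \<or>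
      (\<exists>k < length xs. even (xs ! k) \<and> 0 < xs ! k \<and> y = x + (sum_list (take k xs) + xs ! k div 2))" for y
    by (simp add: mem_midpoints_iff Ex_less_Suc2 add.assoc)
  also have "\<dots> y \<longleftrightarrow> y \<in> (if even x \<and> 0 < x then {x div 2} else {}) \<union> (+) x ` midpoints xs" for y
    unfolding midpoints_def by (auto simp: image_def)
  finally show ?thesis
    by blast
qed

lemma midpoints_subset: "midpoints xs \<subseteq> {1..<sum_list xs}"
proof
  fix x
  assume "x \<in> midpoints xs"
  then obtain k where k: "k < length xs" "even (xs ! k)" "0 < xs ! k"
    and x: "x = sum_list (take k xs) + xs ! k div 2"
    unfolding mem_midpoints_iff by blast
  have "sum_list xs = sum_list (take k xs) + xs ! k + sum_list (drop (Suc k) xs)"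
    using id_take_nth_drop[OF k(1)] by (metis add.assoc sum_list.Cons sum_list_append)
  moreover have "0 < xs ! k div 2"
    using k(2,3) by (auto elim: evenE)
  ultimately show "x \<in> {1..<sum_list xs}"
    unfolding x by auto
qed

lemma succ_pair_in_comp_arcs_iff: "{x, x + 1} \<in> comp_arcs xs \<longleftrightarrow> x \<in> midpoints xs"
  unfolding mem_midpoints_iff
proof
  assume "{x, x + 1} \<in> comp_arcs xs"
  then obtain k j where k: "k < length xs" "1 \<le> j" "j \<le> xs ! k div 2"
    and "{x, x + 1} = {sum_list (take k xs) + j, sum_list (take k xs) + xs ! k + 1 - j}"
    unfolding comp_arcs_def by blast
  then have "xs ! k = 2 * j" and "x = sum_list (take k xs) + j"
    by (auto simp: doubleton_eq_iff)
  with k show "\<exists>k < length xs. even (xs ! k) \<and> 0 < xs ! k \<and> x = sum_list (take k xs) + xs ! k div 2"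
    by auto
next
  assume "\<exists>k < length xs. even (xs ! k) \<and> 0 < xs ! k \<and> x = sum_list (take k xs) + xs ! k div 2"
  then obtain k where "k < length xs" "even (xs ! k)" "0 < xs ! k"
    and "x = sum_list (take k xs) + xs ! k div 2"
    by blast
  moreover from this have "sum_list (take k xs) + xs ! k + 1 - xs ! k div 2 = x + 1"
    by (auto elim: evenE)
  ultimately show "{x, x + 1} \<in> comp_arcs xs"
    using comp_arcsI[of k xs "xs ! k div 2"] by auto
qed

definition induced_adj :: "nat set \<Rightarrow> (nat \<Rightarrow> nat \<Rightarrow> bool) \<Rightarrow> nat \<Rightarrow> nat \<Rightarrow> bool" where
  "induced_adj V E x y \<longleftrightarrow> x \<in> V \<and> y \<in> V \<and> E x y"

lemma induced_adj_rtranclp_extend: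
  assumes "(induced_adj V E)\<^sup>*\<^sup>* u x" and "x \<in> V" and "y \<in> V" and "x \<noteq> y \<Longrightarrow> E x y"
  shows "(induced_adj V E)\<^sup>*\<^sup>* u y"
  using assms by (metis induced_adj_def rtranclp.rtrancl_into_rtrancl)

lemma component_eq_if_connected:
  assumes "is_component V E C" and "symp E" and "\<And>w. w \<in> V \<Longrightarrow> (induced_adj V E)\<^sup>*\<^sup>* v0 w"
  shows "C = V"
proof -
  let ?R = "induced_adj V E"
  obtain v where "v \<in> C" and C: "C = {w \<in> V. ?R\<^sup>*\<^sup>* v w}" and "C \<subseteq> V"
    using assms(1) unfolding is_component_def induced_adj_def[abs_def] by blast
  have "symp ?R"
    using assms(2) by (auto simp: symp_def induced_adj_def)
  then have "?R\<^sup>*\<^sup>* v v0"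
    using assms(3) \<open>v \<in> C\<close> \<open>C \<subseteq> V\<close> by (meson subsetD symp_rtranclp sympD)
  then show ?thesis
    using C assms(3) by (auto intro: rtranclp_trans)
qed

lemma dead_ends_atLeastAtMost: "dead_ends E {1..n} = {i. i + 1 < n \<and> E (i + 1) (i + 2)}"
proof -
  have "sorted_list_of_set {1..n} = [1..<n + 1]"
    by (metis atLeastLessThanSuc_atLeastAtMost sorted_list_of_set_range Suc_eq_plus1)
  moreover have "i < n \<Longrightarrow> [1..<n + 1] ! i = i + 1" for i
    by (simp del: upt_Suc)
  ultimately show ?thesis
    unfolding dead_ends_def Let_def by (auto simp del: upt_Suc)
qed

lemma card_Suc_preimage: "0 \<notin> S \<Longrightarrow> card {i. Suc i \<in> S} = card S"
proof -
  assume "0 \<notin> S"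
  then have "S = Suc ` {i. Suc i \<in> S}"
    by (auto simp: image_iff) (metis not0_implies_Suc)
  then show ?thesis
    by (metis card_image inj_Suc)
qed

lemma symp_meander_adj: "symp (meander_adj xs ys)"
  by (auto simp: symp_def meander_adj_def insert_commute)

lemma meander_adj_Suc_iff: "meander_adj xs ys x (x + 1) \<longleftrightarrow> x \<in> midpoints xs \<union> midpoints ys"
  unfolding meander_adj_def Un_iff succ_pair_in_comp_arcs_iff ..

lemma dead_ends_meander_atLeastAtMost:
  assumes "sum_list xs \<le> n" and "sum_list ys \<le> n"
  shows "dead_ends (meander_adj xs ys) {1..n} = {i. Suc i \<in> midpoints xs \<union> midpoints ys}"
proof -
  have "meander_adj xs ys (i + 1) (i + 2) \<longleftrightarrow> Suc i \<in> midpoints xs \<union> midpoints ys" for i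
    using meander_adj_Suc_iff[of xs ys "i + 1"] by simp
  then show ?thesis
    using midpoints_subset[of xs] midpoints_subset[of ys] assms
    unfolding dead_ends_atLeastAtMost by fastforce
qed

lemma card_meander_midpoints:
  assumes "0 < a" and "0 < b" and "0 < c" and "gcd (a + b) (b + c) = 1"
  shows "card (midpoints [a, b, c] \<union> midpoints [a + b + c]) = 2"
proof -
  have "\<not> (even a \<and> even b \<and> even c)" and "\<not> (odd a \<and> odd b \<and> odd c)"
    using assms(4) gcd_greatest_iff[of 2 "a + b" "b + c"] by auto
  moreover have "a \<noteq> c"
    using assms(2-4) by (auto simp: add.commute)
  ultimately show ?thesis
    using assms(1-3) by (cases "even a"; cases "even b"; cases "even c")
      (auto simp: midpoints_Cons midpoints_Nil elim!: evenE oddE)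
qed

lemma meander_adj_bottom_mirror:
  assumes "1 \<le> x" and "x \<le> n" and "x \<noteq> n + 1 - x"
  shows "meander_adj xs [n] x (n + 1 - x)"
  using mirror_pair_in_comp_arcs[of 0 "[n]" 0 n x "n + 1 - x"] assms
  by (simp add: meander_adj_def)

definition top_mirror :: "nat \<Rightarrow> nat \<Rightarrow> nat \<Rightarrow> nat \<Rightarrow> nat" where
  "top_mirror a b c x =
    (if x \<le> a then a + 1 - x else if x \<le> a + b then 2 * a + b + 1 - x else 2 * (a + b) + c + 1 - x)"

lemma top_mirror_mem: "x \<in> {1..a + b + c} \<Longrightarrow> top_mirror a b c x \<in> {1..a + b + c}"
  by (auto simp: top_mirror_def)

lemma meander_adj_top_mirror:
  assumes "1 \<le> x" and "x \<le> a + b + c" and "x \<noteq> top_mirror a b c x"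
  shows "meander_adj [a, b, c] ys x (top_mirror a b c x)"
proof -
  consider "x \<le> a" | "a < x" "x \<le> a + b" | "a + b < x"
    by linarith
  then have "{x, top_mirror a b c x} \<in> comp_arcs [a, b, c]"
  proof cases
    case 1
    then show ?thesis
      using mirror_pair_in_comp_arcs[of 0 "[a, b, c]" 0 a x] assms by (simp add: top_mirror_def)
  next
    case 2
    then show ?thesis
      using mirror_pair_in_comp_arcs[of 1 "[a, b, c]" a b x] assms by (simp add: top_mirror_def)
  next
    case 3
    then show ?thesis
      using mirror_pair_in_comp_arcs[of 2 "[a, b, c]" "a + b" c x] assms by (simp add: top_mirror_def)
  qed
  then show ?thesis
    by (simp add: meander_adj_def)
qed

text \<open>The rotation \<open>s \<mapsto> s + (a + b)\<close> acts on the residues modulo \<open>n + b\<close>, where \<open>n = a + b + c\<close>.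
  A residue \<open>s < n\<close> stands for the vertex \<open>s + 1\<close>; a residue \<open>s \<ge> n\<close> is a virtual copy of
  the vertex \<open>s + 1 - (a + b)\<close>, visited just before it.\<close>
definition orbit_vertex :: "nat \<Rightarrow> nat \<Rightarrow> nat \<Rightarrow> nat \<Rightarrow> nat" where
  "orbit_vertex a b c s = (if s < a + b + c then s + 1 else s + 1 - (a + b))"

lemma orbit_vertex_mem: "s < a + 2 * b + c \<Longrightarrow> orbit_vertex a b c s \<in> {1..a + b + c}"
  by (auto simp: orbit_vertex_def)

lemma orbit_vertex_rotate:
  assumes "s < a + 2 * b + c"
  defines "v \<equiv> orbit_vertex a b c s"
  shows "orbit_vertex a b c ((s + (a + b)) mod (a + 2 * b + c)) \<in> {v, top_mirror a b c (a + b + c + 1 - v)}"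
proof -
  have "(s + (a + b)) mod (a + 2 * b + c) =
      (if s + (a + b) < a + 2 * b + c then s + (a + b) else s + (a + b) - (a + 2 * b + c))"
    using assms(1) by (auto simp: le_mod_geq)
  then show ?thesis
    using assms(1) unfolding v_def by (auto simp: orbit_vertex_def top_mirror_def)
qed

lemma meander_orbit_reachable:
  assumes "0 < a + b + c"
  shows "(induced_adj {1..a + b + c} (meander_adj [a, b, c] [a + b + c]))\<^sup>*\<^sup>* 1
           (orbit_vertex a b c (k * (a + b) mod (a + 2 * b + c)))"
proof (induction k)
  case 0
  then show ?case
    using assms by (simp add: orbit_vertex_def)
next
  case (Suc k)
  define n where "n = a + b + c"
  define s where "s = k * (a + b) mod (a + 2 * b + c)"
  define v where "v = orbit_vertex a b c s"
  let ?R = "induced_adj {1..n} (meander_adj [a, b, c] [n])"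
  have "s < a + 2 * b + c"
    using assms unfolding s_def by simp
  then have v: "v \<in> {1..n}" and rotate: "orbit_vertex a b c ((s + (a + b)) mod (a + 2 * b + c)) \<in>
      {v, top_mirror a b c (n + 1 - v)}"
    unfolding v_def n_def by (rule orbit_vertex_mem, rule orbit_vertex_rotate)
  have reach_v: "?R\<^sup>*\<^sup>* 1 v"
    using Suc.IH unfolding v_def s_def n_def .
  define w where "w = n + 1 - v"
  have w: "w \<in> {1..n}"
    using v unfolding w_def by auto
  have tw: "top_mirror a b c w \<in> {1..n}"
    using w unfolding n_def by (rule top_mirror_mem)
  have "v \<noteq> w \<Longrightarrow> meander_adj [a, b, c] [n] v w"
    unfolding w_def by (rule meander_adj_bottom_mirror) (use v in auto)
  then have "?R\<^sup>*\<^sup>* 1 w"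
    by (rule induced_adj_rtranclp_extend[OF reach_v v w])
  then have "?R\<^sup>*\<^sup>* 1 (top_mirror a b c w)"
    by (rule induced_adj_rtranclp_extend[OF _ w tw])
      (rule meander_adj_top_mirror; use w in \<open>simp add: n_def\<close>)
  moreover have "Suc k * (a + b) mod (a + 2 * b + c) = (s + (a + b)) mod (a + 2 * b + c)"
    unfolding s_def mod_add_left_eq by (simp add: algebra_simps)
  ultimately show ?case
    using rotate reach_v unfolding n_def w_def by auto
qed

lemma meander_connected:
  assumes "gcd (a + b) (b + c) = 1" and "w \<in> {1..a + b + c}"
  shows "(induced_adj {1..a + b + c} (meander_adj [a, b, c] [a + b + c]))\<^sup>*\<^sup>* 1 w"
proof -
  have "gcd (a + b) (a + 2 * b + c) = 1"
    using assms(1) gcd_add2[of "a + b" "b + c"] by (simp add: add.assoc mult_2)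
  then obtain k where "[(a + b) * k = w - 1] (mod a + 2 * b + c)"
    using cong_solve_dvd_nat[of "a + b" "a + 2 * b + c" "w - 1"] by auto
  moreover have "w - 1 < a + 2 * b + c"
    using assms(2) by auto
  ultimately have "k * (a + b) mod (a + 2 * b + c) = w - 1"
    by (simp add: cong_def mult.commute)
  moreover have "orbit_vertex a b c (w - 1) = w"
    using assms(2) by (auto simp: orbit_vertex_def)
  moreover have "0 < a + b + c"
    using assms(2) unfolding atLeastAtMost_iff by linarith
  ultimately show ?thesis
    using meander_orbit_reachable[of a b c k] by metis
qed

theorem lemma4p12:
  fixes a b c n :: nat and P :: "nat set"
  assumes "0 < a" and "0 < b" and "0 < c"
    and "a + b + c = n"
    and "gcd (a + b) (b + c) = 1"
    and "is_component {1..n} (meander_adj [a, b, c] [n]) P"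
    and "induces_path (meander_adj [a, b, c] [n]) P"
  shows "card (dead_ends (meander_adj [a, b, c] [n]) P) = 2"
proof -
  have P: "P = {1..n}"
  proof (rule component_eq_if_connected[OF assms(6) symp_meander_adj])
    show "(induced_adj {1..n} (meander_adj [a, b, c] [n]))\<^sup>*\<^sup>* 1 w" if "w \<in> {1..n}" for w
      using meander_connected[OF assms(5)] that unfolding assms(4) .
  qed
  have "dead_ends (meander_adj [a, b, c] [n]) P = {i. Suc i \<in> midpoints [a, b, c] \<union> midpoints [n]}"
    unfolding P by (rule dead_ends_meander_atLeastAtMost) (use assms(4) in auto)
  moreover have "0 \<notin> midpoints [a, b, c] \<union> midpoints [n]"
    using midpoints_subset[of "[a, b, c]"] midpoints_subset[of "[n]"] by auto
  moreover have "card (midpoints [a, b, c] \<union> midpoints [n]) = 2"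
    using card_meander_midpoints[OF assms(1-3,5)] unfolding assms(4) .
  ultimately show ?thesis
    by (metis card_Suc_preimage)
qed

end
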